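(* Let $V$ and $W$ be two-dimensional inner-product spaces and let $x,y\in V$ be linearly independent. Let $\theta$ be the angle between $x$ and $y$ and $r=|y|/|x|$. There exists a constant $C>0$, depending continuously on $\theta$ and $r$, such that for every $A\in\mathrm{Hom}(V,W)$, \[ \mathrm{dist}^2(A,\mathrm{O}(V,W))\le C\left[\Big(\frac{|Ax|}{|x|}-1\Big)^2+\Big(\frac{|Ay|}{|y|}-1\Big)^2+\Big(\frac{|A(x+y)|}{|x+y|}-1\Big)^2\right]. \]
   Context: $\mathrm{O}(V,W)$ denotes the set of linear isometries $V\to W$. The distance is measured in the Frobenius (Hilbert–Schmidt) norm induced by the inner products on $V$ and $W$. *)

theory Defs
  imports "HOL-Analysis.Analysis"
begin

text \<open>Frobenius (Hilbert-Schmidt) norm of a map V -> W, computed in the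
  orthonormal basis Basis of the euclidean space V (basis independent for linear maps).\<close>
definition frob_norm :: "('a::euclidean_space \<Rightarrow> 'b::real_inner) \<Rightarrow> real" where
  "frob_norm L = sqrt (\<Sum>b\<in>Basis. (norm (L b))\<^sup>2)"

definition lin_isometries :: "('a::real_normed_vector \<Rightarrow> 'b::real_normed_vector) set" where
  "lin_isometries = {Q. linear Q \<and> (\<forall>v. norm (Q v) = norm v)}"

definition dist_O :: "('a::euclidean_space \<Rightarrow> 'b::euclidean_space) \<Rightarrow> real" where
  "dist_O A = Inf ((\<lambda>Q. frob_norm (\<lambda>v. A v - Q v)) ` lin_isometries)"

definition vangle :: "'a::real_inner \<Rightarrow> 'a \<Rightarrow> real" where
  "vangle x y = (if x = 0 \<or> y = 0 then pi / 2 else arccos (inner x y / (norm x * norm y)))"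

end

theory Submission
  imports Defs
begin

text \<open>Fix an orthonormal frame e1, e2 with x = |x| e1 and y = |y| (cos theta e1 + sin theta e2).
  Applying Gram-Schmidt to A e1, A e2 yields an isometry Q for which Q^-1 A is upper triangular with
  entries p = |A e1|, alpha, beta \<ge> 0, so dist^2(A, O) \<le> (p - 1)^2 + alpha^2 + (beta - 1)^2.
  The three ratios p, q = |A y|/|y|, t = |A (x + y)|/|x + y| determine the Gram matrix of A in the
  frame: the off-diagonal entry and the second diagonal entry are linear combinations of p^2 - 1,
  q^2 - 1, t^2 - 1 with coefficients depending on r and theta.  Hence, when all three ratios are
  within 1/2 of 1, alpha and beta - 1 are bounded by a multiple of |p - 1| + |q - 1| + |t - 1|;
  otherwise the right-hand side is at least 1/4 and a crude bound suffices.  The resulting constant is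
  an explicit rational function of r and sin theta.\<close>

section \<open>Orthonormal frames and the distance to the isometries\<close>

lemma norm_scaleR_add_scaleR_sq:
  fixes X Y :: "'a::real_inner"
  shows "(norm (a *\<^sub>R X + b *\<^sub>R Y))\<^sup>2 = a\<^sup>2 * (norm X)\<^sup>2 + 2 * a * b * inner X Y + b\<^sup>2 * (norm Y)\<^sup>2"
  unfolding power2_norm_eq_inner inner_add_left inner_add_right inner_scaleR_left inner_scaleR_right
  by (simp add: inner_commute[of Y X] power2_eq_square algebra_simps)

lemma orthonormal_pair_expansion:
  fixes e1 e2 z :: "'a::euclidean_space"
  assumes "DIM('a) = 2" "norm e1 = 1" "norm e2 = 1" "inner e1 e2 = 0"
  shows "z = inner z e1 *\<^sub>R e1 + inner z e2 *\<^sub>R e2"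
proof (rule ccontr)
  define z' where "z' = z - (inner z e1 *\<^sub>R e1 + inner z e2 *\<^sub>R e2)"
  assume "z \<noteq> inner z e1 *\<^sub>R e1 + inner z e2 *\<^sub>R e2"
  then have "z' \<noteq> 0" by (simp add: z'_def)
  have e11: "inner e1 e1 = 1" and e22: "inner e2 e2 = 1"
    using assms(2,3) by (simp_all add: dot_square_norm)
  have z'_orth: "inner z' e1 = 0" "inner z' e2 = 0"
    using e11 e22 assms(4) by (simp_all add: z'_def inner_diff_left inner_add_left inner_commute[of e2 e1])
  moreover have "z' \<noteq> e1" "z' \<noteq> e2" "e1 \<noteq> e2" "0 \<notin> {z', e1, e2}"
    using \<open>z' \<noteq> 0\<close> z'_orth e11 e22 assms(2-4) by auto
  ultimately have "pairwise orthogonal {z', e1, e2}" and "card {z', e1, e2} = 3"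
    using assms(4) by (auto simp: pairwise_def orthogonal_def inner_commute)
  then show False
    using pairwise_orthogonal_independent[of "{z', e1, e2}"] independent_bound assms(1)
      \<open>0 \<notin> {z', e1, e2}\<close> by fastforce
qed

lemma exists_unit_orthogonal:
  fixes f :: "'a::euclidean_space"
  assumes "DIM('a) = 2"
  obtains g where "norm g = 1" "inner f g = 0"
proof -
  have "span {f} \<noteq> UNIV"
  proof
    assume "span {f} = UNIV"
    then have "dim (UNIV::'a set) = dim {f}" by (metis dim_span)
    then show False using assms by (simp split: if_splits)
  qed
  then obtain a :: 'a where "a \<noteq> 0" "\<forall>x\<in>span {f}. a \<bullet> x = 0"
    using span_not_UNIV_orthogonal by blast
  then show thesis
    by (intro that[of "a /\<^sub>R norm a"]) (auto simp: inner_commute span_base)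
qed

lemma frob_norm_sq_orthonormal_pair:
  fixes L :: "'a::euclidean_space \<Rightarrow> 'b::real_inner"
  assumes "DIM('a) = 2" "norm e1 = 1" "norm e2 = 1" "inner e1 e2 = 0" "linear L"
  shows "(frob_norm L)\<^sup>2 = (norm (L e1))\<^sup>2 + (norm (L e2))\<^sup>2"
proof -
  have expand: "(norm (L b))\<^sup>2 = (inner b e1)\<^sup>2 * (norm (L e1))\<^sup>2
     + 2 * (inner b e1 * inner b e2) * inner (L e1) (L e2) + (inner b e2)\<^sup>2 * (norm (L e2))\<^sup>2" for b
  proof -
    have "L b = inner b e1 *\<^sub>R L e1 + inner b e2 *\<^sub>R L e2"
      using orthonormal_pair_expansion[OF assms(1-4), of b] assms(5)
      by (metis linear_add linear_scale)
    then show ?thesis by (simp only: norm_scaleR_add_scaleR_sq mult.assoc)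
  qed
  have s1: "(\<Sum>b\<in>Basis. (inner b e1)\<^sup>2) = 1" and s2: "(\<Sum>b\<in>Basis. (inner b e2)\<^sup>2) = 1"
    using euclidean_inner[of e1 e1] euclidean_inner[of e2 e2] assms(2,3)
    by (simp_all add: power2_eq_square inner_commute dot_square_norm)
  have s12: "(\<Sum>b\<in>Basis. inner b e1 * inner b e2) = 0"
    using euclidean_inner[of e1 e2] assms(4) by (simp add: inner_commute)
  have "(frob_norm L)\<^sup>2 = (\<Sum>b\<in>Basis. (norm (L b))\<^sup>2)"
    unfolding frob_norm_def by (simp add: sum_nonneg)
  also have "\<dots> = (\<Sum>b\<in>Basis. (inner b e1)\<^sup>2) * (norm (L e1))\<^sup>2
     + 2 * (\<Sum>b\<in>Basis. inner b e1 * inner b e2) * inner (L e1) (L e2)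
     + (\<Sum>b\<in>Basis. (inner b e2)\<^sup>2) * (norm (L e2))\<^sup>2"
    unfolding sum.cong[OF refl expand] sum.distrib sum_distrib_right sum_distrib_left
    by (simp only: mult.assoc)
  also have "\<dots> = (norm (L e1))\<^sup>2 + (norm (L e2))\<^sup>2" using s1 s2 s12 by simp
  finally show ?thesis .
qed

lemma frob_norm_nonneg: "0 \<le> frob_norm L"
  by (simp add: frob_norm_def sum_nonneg)

lemma dist_O_sq_le:
  fixes A Q :: "'a::euclidean_space \<Rightarrow> 'b::euclidean_space"
  assumes "Q \<in> lin_isometries"
  shows "(dist_O A)\<^sup>2 \<le> (frob_norm (\<lambda>v. A v - Q v))\<^sup>2"
proof -
  let ?X = "(\<lambda>Q. frob_norm (\<lambda>v. A v - Q v)) ` lin_isometries"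
  have mem: "frob_norm (\<lambda>v. A v - Q v) \<in> ?X" using assms by auto
  have "bdd_below ?X" by (rule bdd_belowI[of _ 0]) (auto simp: frob_norm_nonneg)
  then have "dist_O A \<le> frob_norm (\<lambda>v. A v - Q v)"
    unfolding dist_O_def by (rule cInf_lower[OF mem])
  moreover have "0 \<le> dist_O A"
    unfolding dist_O_def using mem by (intro cInf_greatest) (auto simp: frob_norm_nonneg)
  ultimately show ?thesis by (intro power_mono)
qed

lemma orthonormal_pair_map_isometry:
  fixes e1 e2 :: "'a::euclidean_space" and f1 f2 :: "'b::real_inner"
  assumes "DIM('a) = 2" "norm e1 = 1" "norm e2 = 1" "inner e1 e2 = 0"
    and "norm f1 = 1" "norm f2 = 1" "inner f1 f2 = 0"
  shows "(\<lambda>z. inner z e1 *\<^sub>R f1 + inner z e2 *\<^sub>R f2) \<in> lin_isometries"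
proof -
  have "norm (inner z e1 *\<^sub>R f1 + inner z e2 *\<^sub>R f2) = norm z" for z
  proof -
    have "(norm (inner z e1 *\<^sub>R f1 + inner z e2 *\<^sub>R f2))\<^sup>2
        = (norm (inner z e1 *\<^sub>R e1 + inner z e2 *\<^sub>R e2))\<^sup>2"
      using assms by (simp add: norm_scaleR_add_scaleR_sq)
    also have "\<dots> = (norm z)\<^sup>2" using orthonormal_pair_expansion[OF assms(1-4)] by simp
    finally show ?thesis by (simp add: power2_eq_iff_nonneg)
  qed
  moreover have "linear (\<lambda>z. inner z e1 *\<^sub>R f1 + inner z e2 *\<^sub>R f2)"
    by (rule linearI) (simp_all add: inner_add_left algebra_simps)
  ultimately show ?thesis by (simp add: lin_isometries_def)
qed

text \<open>Q maps e1 to the direction of A e1, so that Q^-1 A is upper triangular (a QR decomposition).\<close>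

lemma dist_O_sq_le_triangular:
  fixes A :: "'v::euclidean_space \<Rightarrow> 'w::euclidean_space"
  assumes dv: "DIM('v) = 2" and dw: "DIM('w) = 2"
    and e: "norm e1 = 1" "norm e2 = 1" "inner e1 e2 = 0" and "linear A"
  obtains \<alpha> \<beta> where "\<alpha> * norm (A e1) = inner (A e1) (A e2)"
    "\<alpha>\<^sup>2 + \<beta>\<^sup>2 = (norm (A e2))\<^sup>2" "0 \<le> \<beta>"
    "(dist_O A)\<^sup>2 \<le> (norm (A e1) - 1)\<^sup>2 + \<alpha>\<^sup>2 + (\<beta> - 1)\<^sup>2"
proof -
  obtain f1 :: 'w where f1: "norm f1 = 1" "A e1 = norm (A e1) *\<^sub>R f1"
  proof (cases "A e1 = 0")
    case True
    obtain g :: 'w where "norm g = 1" using exists_unit_orthogonal[OF dw] by metis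
    with True show thesis by (intro that[of g]) auto
  next
    case False
    then show thesis by (intro that[of "A e1 /\<^sub>R norm (A e1)"]) auto
  qed
  obtain g :: 'w where g: "norm g = 1" "inner f1 g = 0"
    using exists_unit_orthogonal[OF dw] by metis
  define f2 where "f2 = (if 0 \<le> inner (A e2) g then g else - g)"
  have f2: "norm f2 = 1" "inner f1 f2 = 0" "0 \<le> inner (A e2) f2"
    using g by (auto simp: f2_def)
  define \<alpha> where "\<alpha> = inner (A e2) f1"
  define \<beta> where "\<beta> = inner (A e2) f2"
  define Q where "Q = (\<lambda>z. inner z e1 *\<^sub>R f1 + inner z e2 *\<^sub>R f2)"
  have Q: "Q \<in> lin_isometries"
    unfolding Q_def by (rule orthonormal_pair_map_isometry[OF dv e f1(1) f2(1,2)])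
  have Qe: "Q e1 = f1" "Q e2 = f2"
    using e by (simp_all add: Q_def dot_square_norm inner_commute[of e2 e1])
  have Ae2: "A e2 = \<alpha> *\<^sub>R f1 + \<beta> *\<^sub>R f2"
    unfolding \<alpha>_def \<beta>_def by (rule orthonormal_pair_expansion[OF dw f1(1) f2(1,2)])
  have "A e1 - f1 = (norm (A e1) - 1) *\<^sub>R f1" and "A e2 - f2 = \<alpha> *\<^sub>R f1 + (\<beta> - 1) *\<^sub>R f2"
    using f1(2) Ae2 by (simp_all add: algebra_simps)
  then have "(frob_norm (\<lambda>v. A v - Q v))\<^sup>2 = (norm (A e1) - 1)\<^sup>2 + \<alpha>\<^sup>2 + (\<beta> - 1)\<^sup>2"
    using frob_norm_sq_orthonormal_pair[OF dv e linear_compose_sub[OF \<open>linear A\<close>]] Q f1(1) f2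
    by (simp add: Qe lin_isometries_def norm_scaleR_add_scaleR_sq power_mult_distrib)
  moreover have "\<alpha> * norm (A e1) = inner (A e1) (A e2)"
    by (subst (2) f1(2)) (simp add: \<alpha>_def inner_commute)
  moreover have "\<alpha>\<^sup>2 + \<beta>\<^sup>2 = (norm (A e2))\<^sup>2"
    using f1(1) f2 by (simp add: Ae2 norm_scaleR_add_scaleR_sq)
  ultimately show thesis
    using that dist_O_sq_le[OF Q, of A] f2(3) by (simp add: \<beta>_def)
qed

lemma independent_pair_frame:
  fixes x y :: "'a::real_inner"
  assumes "independent {x, y}" and "x \<noteq> y"
  obtains e1 e2 where "norm e1 = 1" "norm e2 = 1" "inner e1 e2 = 0" "x = norm x *\<^sub>R e1"
    "y = norm y *\<^sub>R (cos (vangle x y) *\<^sub>R e1 + sin (vangle x y) *\<^sub>R e2)"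
    "0 < sin (vangle x y)"
proof -
  have x0: "x \<noteq> 0" and y0: "y \<noteq> 0" using assms(1) dependent_zero by auto
  have x_span: "x \<notin> span {y}" using assms by (simp add: independent_insert)
  define e1 where "e1 = x /\<^sub>R norm x"
  define v where "v = y /\<^sub>R norm y"
  define k where "k = inner e1 v"
  define w where "w = v - k *\<^sub>R e1"
  define s where "s = norm w"
  have e1: "norm e1 = 1" "x = norm x *\<^sub>R e1" and v: "norm v = 1" "y = norm y *\<^sub>R v"
    using x0 y0 by (simp_all add: e1_def v_def)
  have "w \<noteq> 0"
  proof
    assume "w = 0"
    then have y_e1: "y = (norm y * k) *\<^sub>R e1" using v(2) by (simp add: w_def)
    then have "k \<noteq> 0" using y0 by auto
    have "x = (norm x / (norm y * k)) *\<^sub>R ((norm y * k) *\<^sub>R e1)"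
      using e1(2) y0 \<open>k \<noteq> 0\<close> by simp
    then have "x = (norm x / (norm y * k)) *\<^sub>R y" by (simp only: flip: y_e1)
    then show False using x_span by (metis span_base span_scale singletonI)
  qed
  then have s0: "0 < s" by (simp add: s_def)
  have "inner e1 e1 = 1" "inner v v = 1" using e1(1) v(1) by (simp_all add: dot_square_norm)
  then have "s\<^sup>2 = 1 - k\<^sup>2"
    unfolding s_def w_def power2_norm_eq_inner
    by (simp add: k_def inner_diff_left inner_diff_right inner_commute[of v e1] power2_eq_square)
  then have k1: "\<bar>k\<bar> \<le> 1" and s_eq: "s = sqrt (1 - k\<^sup>2)"
    using s0 zero_le_power2[of s] by (auto simp: abs_square_le_1 real_sqrt_unique)
  have "vangle x y = arccos k"
    using x0 y0 by (simp add: vangle_def k_def e1_def v_def field_simps)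
  then have cs: "cos (vangle x y) = k" "sin (vangle x y) = s"
    using k1 s_eq by (simp_all add: sin_arccos_abs)
  define e2 where "e2 = w /\<^sub>R s"
  have "norm e2 = 1" using s0 by (simp add: e2_def s_def)
  moreover have "inner e1 e2 = 0"
    using s0 e1(1) by (simp add: e2_def w_def inner_diff_right k_def dot_square_norm)
  moreover have "v = cos (vangle x y) *\<^sub>R e1 + sin (vangle x y) *\<^sub>R e2"
    using s0 by (simp add: cs e2_def w_def)
  ultimately show thesis using that e1 v(2) s0 cs by metis
qed

section \<open>Estimates for the Gram matrix\<close>

lemma sq_add_le: "(x + y)\<^sup>2 \<le> 2 * x\<^sup>2 + 2 * y\<^sup>2" for x y :: real
  using zero_le_power2[of "x - y"] by (simp add: power2_eq_square algebra_simps)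

lemma sq_diff_le: "(x - y)\<^sup>2 \<le> 2 * x\<^sup>2 + 2 * y\<^sup>2" for x y :: real
  using sq_add_le[of x "- y"] by simp

lemma abs_power2_minus_one_le:
  fixes z :: real
  assumes "\<bar>z - 1\<bar> \<le> 1/2"
  shows "\<bar>z\<^sup>2 - 1\<bar> \<le> 3 * \<bar>z - 1\<bar>"
proof -
  have "\<bar>z\<^sup>2 - 1\<bar> = \<bar>z - 1\<bar> * \<bar>z + 1\<bar>"
    by (simp add: power2_eq_square algebra_simps flip: abs_mult)
  moreover have "\<bar>z + 1\<bar> \<le> 3" using assms by arith
  ultimately show ?thesis by (metis abs_ge_zero mult.commute mult_left_mono)
qed

lemma sum3_abs_sq_le: "(\<bar>a\<bar> + \<bar>b\<bar> + \<bar>c\<bar>)\<^sup>2 \<le> 3 * (a\<^sup>2 + b\<^sup>2 + c\<^sup>2)" for a b c :: real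
proof -
  have "3 * (a\<^sup>2 + b\<^sup>2 + c\<^sup>2) - (\<bar>a\<bar> + \<bar>b\<bar> + \<bar>c\<bar>)\<^sup>2
      = (\<bar>a\<bar> - \<bar>b\<bar>)\<^sup>2 + (\<bar>b\<bar> - \<bar>c\<bar>)\<^sup>2 + (\<bar>a\<bar> - \<bar>c\<bar>)\<^sup>2"
    by (simp add: power2_eq_square algebra_simps)
  then show ?thesis by (smt (verit) zero_le_power2)
qed

lemma triangular_deviation_le:
  fixes \<alpha> \<beta> a d :: real
  assumes "0 \<le> \<beta>" and "\<bar>\<alpha>\<bar> \<le> a" and "\<bar>\<alpha>\<^sup>2 + \<beta>\<^sup>2 - 1\<bar> \<le> d"
  shows "\<alpha>\<^sup>2 + (\<beta> - 1)\<^sup>2 \<le> a\<^sup>2 + 2 * d\<^sup>2 + 2 * a ^ 4"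
proof -
  have \<alpha>: "\<alpha>\<^sup>2 \<le> a\<^sup>2" using assms(2) by (metis abs_le_square_iff abs_of_nonneg abs_ge_zero order_trans)
  have "1\<^sup>2 \<le> (\<beta> + 1)\<^sup>2" using assms(1) by (intro power_mono) auto
  then have "(\<beta> - 1)\<^sup>2 \<le> (\<beta> - 1)\<^sup>2 * (\<beta> + 1)\<^sup>2"
    using mult_left_mono[of 1 "(\<beta> + 1)\<^sup>2" "(\<beta> - 1)\<^sup>2"] by simp
  also have "\<dots> = ((\<alpha>\<^sup>2 + \<beta>\<^sup>2 - 1) - \<alpha>\<^sup>2)\<^sup>2" by (simp add: power2_eq_square algebra_simps)
  also have "\<dots> \<le> 2 * (\<alpha>\<^sup>2 + \<beta>\<^sup>2 - 1)\<^sup>2 + 2 * (\<alpha>\<^sup>2)\<^sup>2" by (rule sq_diff_le)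
  also have "\<dots> \<le> 2 * d\<^sup>2 + 2 * (a\<^sup>2)\<^sup>2"
    using power_mono[OF \<alpha>, of 2] power_mono[OF assms(3), of 2] by simp
  also have "\<dots> = 2 * d\<^sup>2 + 2 * a ^ 4" by simp
  finally show ?thesis using \<alpha> by linarith
qed

definition offdiag_const :: "real \<Rightarrow> real \<Rightarrow> real" where
  "offdiag_const r s = 3 * (1 + r)\<^sup>2 / (r * s)"

definition diag_const :: "real \<Rightarrow> real \<Rightarrow> real" where
  "diag_const r s = (3 + 2 * offdiag_const r s) / s\<^sup>2"

definition stability_const :: "real \<Rightarrow> real \<Rightarrow> real" where
  "stability_const r s = 37 + 80 / s\<^sup>2
     + 3 * (4 * (offdiag_const r s)\<^sup>2 + 2 * (diag_const r s)\<^sup>2 + 72 * (offdiag_const r s) ^ 4)"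

text \<open>The parameters model an orthonormal frame e1, e2 of V with x = |x| e1: p, q, t are the ratios
  |A x|/|x|, |A y|/|y|, |A (x + y)|/|x + y|; g12 = <A e1, A e2> and g22 = |A e2|^2 are Gram entries
  (the remaining one being p^2); k and s are the cosine and sine of the angle, and r = |y|/|x|.\<close>

locale gram_constraints =
  fixes p q t g12 g22 k s r :: real
  assumes cos_sin: "k\<^sup>2 + s\<^sup>2 = 1" and s_pos: "0 < s" and r_pos: "0 < r"
    and q_sq: "q\<^sup>2 = k\<^sup>2 * p\<^sup>2 + 2 * k * s * g12 + s\<^sup>2 * g22"
    and t_sq: "(1 + 2 * r * k + r\<^sup>2) * t\<^sup>2
      = (1 + r * k)\<^sup>2 * p\<^sup>2 + 2 * (1 + r * k) * r * s * g12 + r\<^sup>2 * s\<^sup>2 * g22"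
begin

lemma abs_k_le_one: "\<bar>k\<bar> \<le> 1"
  using cos_sin by (metis abs_square_le_1 le_add_same_cancel1 zero_le_power2)

lemma s_le_one: "s \<le> 1"
  using cos_sin s_pos by (metis abs_of_pos abs_square_le_1 le_add_same_cancel2 zero_le_power2)

lemma offdiag_identity:
  "2 * r * s * g12 = (1 + 2 * r * k + r\<^sup>2) * (t\<^sup>2 - 1) - r\<^sup>2 * (q\<^sup>2 - 1) - (1 + 2 * r * k) * (p\<^sup>2 - 1)"
  using t_sq q_sq by (simp add: power2_eq_square algebra_simps)

lemma diag_identity: "s\<^sup>2 * (g22 - 1) = (q\<^sup>2 - 1) - k\<^sup>2 * (p\<^sup>2 - 1) - 2 * k * s * g12"
  using q_sq cos_sin by (simp add: algebra_simps)

lemma offdiag_bound: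
  assumes "\<bar>p - 1\<bar> \<le> 1/2" "\<bar>q - 1\<bar> \<le> 1/2" "\<bar>t - 1\<bar> \<le> 1/2"
  shows "\<bar>g12\<bar> \<le> offdiag_const r s * (\<bar>p - 1\<bar> + \<bar>q - 1\<bar> + \<bar>t - 1\<bar>)"
proof -
  have rk: "r * k \<le> r" "- r \<le> r * k"
    using abs_k_le_one r_pos mult_left_mono[of k 1 r] mult_left_mono[of "- 1" k r]
    by (simp_all add: abs_le_iff)
  have sq: "(1 + r)\<^sup>2 = 1 + 2 * r + r\<^sup>2" by (simp add: power2_eq_square algebra_simps)
  have coeffs: "\<bar>1 + 2 * r * k + r\<^sup>2\<bar> \<le> (1 + r)\<^sup>2" "r\<^sup>2 \<le> (1 + r)\<^sup>2" "\<bar>1 + 2 * r * k\<bar> \<le> (1 + r)\<^sup>2"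
    unfolding abs_le_iff sq using rk r_pos zero_le_power2[of r] by linarith+
  have "2 * (r * s * \<bar>g12\<bar>) = \<bar>2 * r * s * g12\<bar>"
    using r_pos s_pos by (simp add: abs_mult)
  also have "\<dots> \<le> \<bar>1 + 2 * r * k + r\<^sup>2\<bar> * \<bar>t\<^sup>2 - 1\<bar> + r\<^sup>2 * \<bar>q\<^sup>2 - 1\<bar> + \<bar>1 + 2 * r * k\<bar> * \<bar>p\<^sup>2 - 1\<bar>"
  proof -
    have "\<bar>r\<^sup>2 * (q\<^sup>2 - 1)\<bar> = r\<^sup>2 * \<bar>q\<^sup>2 - 1\<bar>" by (simp add: abs_mult)
    then show ?thesis unfolding offdiag_identity abs_mult[symmetric] by linarith
  qed
  also have "\<dots> \<le> (1 + r)\<^sup>2 * (3 * \<bar>t - 1\<bar>) + (1 + r)\<^sup>2 * (3 * \<bar>q - 1\<bar>) + (1 + r)\<^sup>2 * (3 * \<bar>p - 1\<bar>)"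
    using assms by (intro add_mono mult_mono coeffs abs_power2_minus_one_le) auto
  finally have "2 * (r * s * \<bar>g12\<bar>) \<le> 3 * (1 + r)\<^sup>2 * (\<bar>p - 1\<bar> + \<bar>q - 1\<bar> + \<bar>t - 1\<bar>)"
    by (simp add: algebra_simps)
  moreover have "0 \<le> r * s * \<bar>g12\<bar>" using r_pos s_pos by simp
  ultimately have "r * s * \<bar>g12\<bar> \<le> 3 * (1 + r)\<^sup>2 * (\<bar>p - 1\<bar> + \<bar>q - 1\<bar> + \<bar>t - 1\<bar>)"
    by linarith
  then show ?thesis
    using r_pos s_pos by (simp add: offdiag_const_def pos_le_divide_eq mult.commute)
qed

lemma diag_bound:
  assumes "\<bar>p - 1\<bar> \<le> 1/2" "\<bar>q - 1\<bar> \<le> 1/2" "\<bar>t - 1\<bar> \<le> 1/2"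
  shows "\<bar>g22 - 1\<bar> \<le> diag_const r s * (\<bar>p - 1\<bar> + \<bar>q - 1\<bar> + \<bar>t - 1\<bar>)"
proof -
  let ?T = "\<bar>p - 1\<bar> + \<bar>q - 1\<bar> + \<bar>t - 1\<bar>"
  have k2: "k\<^sup>2 \<le> 1" using abs_k_le_one by (simp add: abs_square_le_1)
  have "s\<^sup>2 * \<bar>g22 - 1\<bar> = \<bar>s\<^sup>2 * (g22 - 1)\<bar>" by (simp add: abs_mult)
  also have "\<dots> \<le> \<bar>q\<^sup>2 - 1\<bar> + k\<^sup>2 * \<bar>p\<^sup>2 - 1\<bar> + 2 * (\<bar>k\<bar> * s * \<bar>g12\<bar>)"
  proof -
    have "\<bar>2 * k * s * g12\<bar> = 2 * (\<bar>k\<bar> * s * \<bar>g12\<bar>)" "\<bar>k\<^sup>2 * (p\<^sup>2 - 1)\<bar> = k\<^sup>2 * \<bar>p\<^sup>2 - 1\<bar>"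
      using s_pos by (simp_all add: abs_mult)
    then show ?thesis unfolding diag_identity by linarith
  qed
  also have "\<dots> \<le> 3 * \<bar>q - 1\<bar> + 1 * (3 * \<bar>p - 1\<bar>) + 2 * (1 * 1 * (offdiag_const r s * ?T))"
    using assms s_pos
    by (intro add_mono mult_mono mult_left_mono abs_power2_minus_one_le k2 abs_k_le_one s_le_one
        offdiag_bound) auto
  also have "\<dots> \<le> (3 + 2 * offdiag_const r s) * ?T"
    by (simp add: algebra_simps)
  finally show ?thesis
    using s_pos by (simp add: diag_const_def pos_le_divide_eq mult.commute)
qed

lemma small_deviation_estimate:
  assumes small: "\<bar>p - 1\<bar> \<le> 1/2" "\<bar>q - 1\<bar> \<le> 1/2" "\<bar>t - 1\<bar> \<le> 1/2"
    and \<alpha>: "\<alpha> * p = g12" and \<alpha>\<beta>: "\<alpha>\<^sup>2 + \<beta>\<^sup>2 = g22" and "0 \<le> \<beta>"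
  shows "(p - 1)\<^sup>2 + \<alpha>\<^sup>2 + (\<beta> - 1)\<^sup>2
    \<le> (1 + 3 * (4 * (offdiag_const r s)\<^sup>2 + 2 * (diag_const r s)\<^sup>2 + 72 * (offdiag_const r s) ^ 4))
      * ((p - 1)\<^sup>2 + (q - 1)\<^sup>2 + (t - 1)\<^sup>2)"
proof -
  define T where "T = \<bar>p - 1\<bar> + \<bar>q - 1\<bar> + \<bar>t - 1\<bar>"
  define L where "L = offdiag_const r s"
  define M where "M = diag_const r s"
  define P where "P = 4 * L\<^sup>2 + 2 * M\<^sup>2 + 72 * L ^ 4"
  define S where "S = (p - 1)\<^sup>2 + (q - 1)\<^sup>2 + (t - 1)\<^sup>2"
  have T: "0 \<le> T" "T\<^sup>2 \<le> 9/4"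
    using small power_mono[of T "3/2" 2] by (auto simp: T_def power2_eq_square)
  have "1/2 \<le> p" using small(1) by arith
  then have "\<bar>\<alpha>\<bar> * (1/2) \<le> \<bar>\<alpha>\<bar> * p" by (intro mult_left_mono) auto
  also have "\<dots> \<le> L * T"
    using offdiag_bound[OF small] \<open>1/2 \<le> p\<close> \<alpha> by (simp add: L_def T_def abs_mult)
  finally have "\<bar>\<alpha>\<bar> \<le> 2 * L * T" by simp
  moreover have "\<bar>\<alpha>\<^sup>2 + \<beta>\<^sup>2 - 1\<bar> \<le> M * T"
    using diag_bound[OF small] by (simp add: \<alpha>\<beta> M_def T_def)
  ultimately have "\<alpha>\<^sup>2 + (\<beta> - 1)\<^sup>2 \<le> (2 * L * T)\<^sup>2 + 2 * (M * T)\<^sup>2 + 2 * (2 * L * T) ^ 4"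
    by (rule triangular_deviation_le[OF \<open>0 \<le> \<beta>\<close>])
  also have "\<dots> = 4 * L\<^sup>2 * T\<^sup>2 + 2 * M\<^sup>2 * T\<^sup>2 + 32 * L ^ 4 * (T\<^sup>2 * T\<^sup>2)"
    by (simp add: power_mult_distrib power2_eq_square power4_eq_xxxx)
  also have "\<dots> \<le> P * T\<^sup>2"
    using T mult_left_mono[of "T\<^sup>2" "9/4" "32 * L ^ 4 * T\<^sup>2"]
    by (simp add: P_def algebra_simps power2_eq_square)
  also have "\<dots> \<le> P * (3 * S)"
    unfolding T_def S_def by (intro mult_left_mono sum3_abs_sq_le) (simp add: P_def)
  finally have "\<alpha>\<^sup>2 + (\<beta> - 1)\<^sup>2 \<le> P * (3 * S)" .
  moreover have "(p - 1)\<^sup>2 \<le> S" "(1 + 3 * P) * S = S + P * (3 * S)"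
    by (simp_all add: S_def algebra_simps)
  ultimately have "(p - 1)\<^sup>2 + \<alpha>\<^sup>2 + (\<beta> - 1)\<^sup>2 \<le> (1 + 3 * P) * S" by linarith
  then show ?thesis by (simp only: P_def L_def M_def S_def)
qed

lemma large_deviation_estimate:
  assumes large: "1/2 < \<bar>p - 1\<bar> \<or> 1/2 < \<bar>q - 1\<bar> \<or> 1/2 < \<bar>t - 1\<bar>"
    and g22_le: "s\<^sup>2 * g22 \<le> (p + q)\<^sup>2" and \<alpha>\<beta>: "\<alpha>\<^sup>2 + \<beta>\<^sup>2 = g22"
  shows "(p - 1)\<^sup>2 + \<alpha>\<^sup>2 + (\<beta> - 1)\<^sup>2 \<le> (36 + 80 / s\<^sup>2) * ((p - 1)\<^sup>2 + (q - 1)\<^sup>2 + (t - 1)\<^sup>2)"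
proof -
  define S where "S = (p - 1)\<^sup>2 + (q - 1)\<^sup>2 + (t - 1)\<^sup>2"
  have "1/4 \<le> z\<^sup>2" if "1/2 < \<bar>z\<bar>" for z :: real
    using power_mono[of "1/2" "\<bar>z\<bar>" 2] that by (simp add: power2_eq_square)
  then have "1/4 \<le> (p - 1)\<^sup>2 \<or> 1/4 \<le> (q - 1)\<^sup>2 \<or> 1/4 \<le> (t - 1)\<^sup>2" using large by blast
  then have S: "1 \<le> 4 * S"
    unfolding S_def distrib_left
    using zero_le_power2[of "p - 1"] zero_le_power2[of "q - 1"] zero_le_power2[of "t - 1"]
    by (elim disjE) linarith+
  have p2: "p\<^sup>2 \<le> 2 + 2 * (p - 1)\<^sup>2" and q2: "q\<^sup>2 \<le> 2 + 2 * (q - 1)\<^sup>2"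
    using sq_add_le[of "p - 1" 1] sq_add_le[of "q - 1" 1] by simp_all
  have "(p - 1)\<^sup>2 + \<alpha>\<^sup>2 + (\<beta> - 1)\<^sup>2 \<le> 2 * p\<^sup>2 + 4 + 2 * g22"
    using sq_diff_le[of p 1] sq_diff_le[of \<beta> 1] zero_le_power2[of \<alpha>] \<alpha>\<beta>
    unfolding power_one mult_1_right by linarith
  also have "\<dots> \<le> 36 * S + 72 * S / s\<^sup>2"
  proof -
    have "s\<^sup>2 * g22 \<le> 36 * S"
      using g22_le sq_add_le[of p q] p2 q2 S zero_le_power2[of "t - 1"]
      unfolding S_def distrib_left by linarith
    then have "2 * g22 \<le> 72 * S / s\<^sup>2" using s_pos by (simp add: pos_le_divide_eq mult.commute)
    moreover have "(p - 1)\<^sup>2 \<le> S" by (simp add: S_def)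
    ultimately show ?thesis using p2 S by linarith
  qed
  also have "\<dots> \<le> (36 + 80 / s\<^sup>2) * S"
    using S s_pos by (simp add: algebra_simps divide_right_mono)
  finally show ?thesis unfolding S_def .
qed

lemma stability_estimate:
  assumes g22_le: "s\<^sup>2 * g22 \<le> (p + q)\<^sup>2"
    and \<alpha>: "\<alpha> * p = g12" and \<alpha>\<beta>: "\<alpha>\<^sup>2 + \<beta>\<^sup>2 = g22" and "0 \<le> \<beta>"
  shows "(p - 1)\<^sup>2 + \<alpha>\<^sup>2 + (\<beta> - 1)\<^sup>2 \<le> stability_const r s * ((p - 1)\<^sup>2 + (q - 1)\<^sup>2 + (t - 1)\<^sup>2)"
proof -
  define S where "S = (p - 1)\<^sup>2 + (q - 1)\<^sup>2 + (t - 1)\<^sup>2"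
  define P where "P = 4 * (offdiag_const r s)\<^sup>2 + 2 * (diag_const r s)\<^sup>2 + 72 * (offdiag_const r s) ^ 4"
  have "0 \<le> S" "0 \<le> P" "0 \<le> 80 / s\<^sup>2" by (simp_all add: S_def P_def)
  then have K: "1 + 3 * P \<le> stability_const r s" "36 + 80 / s\<^sup>2 \<le> stability_const r s"
    by (simp_all add: stability_const_def P_def)
  show ?thesis
  proof (cases "\<bar>p - 1\<bar> \<le> 1/2 \<and> \<bar>q - 1\<bar> \<le> 1/2 \<and> \<bar>t - 1\<bar> \<le> 1/2")
    case True
    then have "(p - 1)\<^sup>2 + \<alpha>\<^sup>2 + (\<beta> - 1)\<^sup>2 \<le> (1 + 3 * P) * S"
      unfolding S_def P_def by (intro small_deviation_estimate[OF _ _ _ \<alpha> \<alpha>\<beta> \<open>0 \<le> \<beta>\<close>]) auto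
    also have "\<dots> \<le> stability_const r s * S" using K(1) \<open>0 \<le> S\<close> by (rule mult_right_mono)
    finally show ?thesis unfolding S_def .
  next
    case False
    then have "(p - 1)\<^sup>2 + \<alpha>\<^sup>2 + (\<beta> - 1)\<^sup>2 \<le> (36 + 80 / s\<^sup>2) * S"
      unfolding S_def by (intro large_deviation_estimate[OF _ g22_le \<alpha>\<beta>]) auto
    also have "\<dots> \<le> stability_const r s * S" using K(2) \<open>0 \<le> S\<close> by (rule mult_right_mono)
    finally show ?thesis unfolding S_def .
  qed
qed

end

lemma gram_constraints_frame:
  fixes A :: "'a::real_inner \<Rightarrow> 'b::real_inner"
  assumes e: "norm e1 = 1" "norm e2 = 1" "inner e1 e2 = 0" and lin: "linear A"
    and ks: "k\<^sup>2 + s\<^sup>2 = 1" and "0 < s" "0 < r"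
  defines "z \<equiv> (1 + r * k) *\<^sub>R e1 + (r * s) *\<^sub>R e2"
  shows "gram_constraints (norm (A e1)) (norm (k *\<^sub>R A e1 + s *\<^sub>R A e2)) (norm (A z) / norm z)
    (inner (A e1) (A e2)) ((norm (A e2))\<^sup>2) k s r"
proof
  show "(norm (k *\<^sub>R A e1 + s *\<^sub>R A e2))\<^sup>2
    = k\<^sup>2 * (norm (A e1))\<^sup>2 + 2 * k * s * inner (A e1) (A e2) + s\<^sup>2 * (norm (A e2))\<^sup>2"
    by (simp add: norm_scaleR_add_scaleR_sq)
  have z_sq': "(norm z)\<^sup>2 = (1 + r * k)\<^sup>2 + (r * s)\<^sup>2"
    unfolding z_def norm_scaleR_add_scaleR_sq using e by simp
  also have "\<dots> = 1 + 2 * r * k + r\<^sup>2 * (k\<^sup>2 + s\<^sup>2)" by (simp add: power2_eq_square algebra_simps)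
  finally have z_sq: "(norm z)\<^sup>2 = 1 + 2 * r * k + r\<^sup>2" using ks by simp
  have "0 < (r * s)\<^sup>2" using \<open>0 < s\<close> \<open>0 < r\<close> by simp
  then have "z \<noteq> 0" using z_sq' zero_le_power2[of "1 + r * k"] by fastforce
  then have "(1 + 2 * r * k + r\<^sup>2) * (norm (A z) / norm z)\<^sup>2 = (norm (A z))\<^sup>2"
    by (simp add: power_divide flip: z_sq)
  also have "\<dots> = (1 + r * k)\<^sup>2 * (norm (A e1))\<^sup>2 + 2 * (1 + r * k) * r * s * inner (A e1) (A e2)
      + r\<^sup>2 * s\<^sup>2 * (norm (A e2))\<^sup>2"
    unfolding z_def linear_add[OF lin] linear_cmul[OF lin] norm_scaleR_add_scaleR_sq
    by (simp add: power_mult_distrib mult.assoc)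
  finally show "(1 + 2 * r * k + r\<^sup>2) * (norm (A z) / norm z)\<^sup>2
    = (1 + r * k)\<^sup>2 * (norm (A e1))\<^sup>2 + 2 * (1 + r * k) * r * s * inner (A e1) (A e2)
      + r\<^sup>2 * s\<^sup>2 * (norm (A e2))\<^sup>2" .
qed (use assms in auto)

lemma dist_O_sq_le_stability_const:
  fixes x y :: "'v::euclidean_space" and A :: "'v \<Rightarrow> 'w::euclidean_space"
  assumes dv: "DIM('v) = 2" and dw: "DIM('w) = 2"
    and "independent {x, y}" "x \<noteq> y" and lin: "linear A"
  shows "(dist_O A)\<^sup>2 \<le> stability_const (norm y / norm x) (sin (vangle x y)) *
          ((norm (A x) / norm x - 1)\<^sup>2 + (norm (A y) / norm y - 1)\<^sup>2
           + (norm (A (x + y)) / norm (x + y) - 1)\<^sup>2)"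
proof -
  define k where "k = cos (vangle x y)"
  define s where "s = sin (vangle x y)"
  define r where "r = norm y / norm x"
  obtain e1 e2 where e: "norm e1 = 1" "norm e2 = 1" "inner e1 e2 = 0"
    and x: "x = norm x *\<^sub>R e1" and y: "y = norm y *\<^sub>R (k *\<^sub>R e1 + s *\<^sub>R e2)" and s_pos: "0 < s"
    using independent_pair_frame[OF assms(3,4)] unfolding k_def s_def by metis
  have ks: "k\<^sup>2 + s\<^sup>2 = 1" by (simp add: k_def s_def add.commute)
  have "x \<noteq> 0" "y \<noteq> 0" using assms(3) dependent_zero by auto
  then have nx: "0 < norm x" and r_pos: "0 < r" by (simp_all add: r_def)
  define z where "z = (1 + r * k) *\<^sub>R e1 + (r * s) *\<^sub>R e2"
  define p where "p = norm (A e1)"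
  define q where "q = norm (k *\<^sub>R A e1 + s *\<^sub>R A e2)"
  define t where "t = norm (A z) / norm z"
  define g12 where "g12 = inner (A e1) (A e2)"
  define g22 where "g22 = (norm (A e2))\<^sup>2"
  interpret gram_constraints p q t g12 g22 k s r
    unfolding p_def q_def t_def g12_def g22_def z_def
    by (rule gram_constraints_frame[OF e lin ks s_pos r_pos])
  have xy: "x + y = norm x *\<^sub>R z"
    using nx by (subst x, subst y) (simp add: z_def r_def algebra_simps)
  have "A x = norm x *\<^sub>R A e1" "A y = norm y *\<^sub>R (k *\<^sub>R A e1 + s *\<^sub>R A e2)"
    "A (x + y) = norm x *\<^sub>R A z"
    using arg_cong[OF x, of A] arg_cong[OF y, of A] arg_cong[OF xy, of A]
    by (simp_all add: linear_add[OF lin] linear_cmul[OF lin])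
  then have ratios: "norm (A x) / norm x = p" "norm (A y) / norm y = q"
    "norm (A (x + y)) / norm (x + y) = t"
    using nx \<open>y \<noteq> 0\<close> by (simp_all add: xy p_def q_def t_def)
  have "s * norm (A e2) = norm ((k *\<^sub>R A e1 + s *\<^sub>R A e2) - k *\<^sub>R A e1)" using s_pos by simp
  also have "\<dots> \<le> q + \<bar>k\<bar> * p" by (metis norm_triangle_ineq4 norm_scaleR p_def q_def)
  also have "\<dots> \<le> p + q" using abs_k_le_one by (simp add: p_def mult_left_le_one_le)
  finally have g22_le: "s\<^sup>2 * g22 \<le> (p + q)\<^sup>2"
    using power_mono[of "s * norm (A e2)" "p + q" 2] s_pos by (simp add: g22_def power_mult_distrib)
  obtain \<alpha> \<beta> where \<alpha>\<beta>: "\<alpha> * p = g12" "\<alpha>\<^sup>2 + \<beta>\<^sup>2 = g22" "0 \<le> \<beta>"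
    and dist: "(dist_O A)\<^sup>2 \<le> (p - 1)\<^sup>2 + \<alpha>\<^sup>2 + (\<beta> - 1)\<^sup>2"
    using dist_O_sq_le_triangular[OF dv dw e lin] unfolding p_def g12_def g22_def by metis
  show ?thesis
    using dist stability_estimate[OF g22_le \<alpha>\<beta>]
    unfolding ratios r_def[symmetric] s_def[symmetric] by linarith
qed

lemma stability_const_pos: "0 < stability_const r s"
  unfolding stability_const_def by (intro add_pos_nonneg) auto

theorem lemmaA4:
  assumes "DIM('v::euclidean_space) = 2" and "DIM('w::euclidean_space) = 2"
  shows "\<exists>C :: real \<times> real \<Rightarrow> real.
    continuous_on ({0<..<pi} \<times> {0<..}) C \<and>
    (\<forall>p \<in> {0<..<pi} \<times> {0<..}. C p > 0) \<and>
    (\<forall>(x::'v) (y::'v). independent {x, y} \<and> x \<noteq> y \<longrightarrow>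
      (\<forall>A :: 'v \<Rightarrow> 'w. linear A \<longrightarrow>
        (dist_O A)\<^sup>2 \<le> C (vangle x y, norm y / norm x) *
          ((norm (A x) / norm x - 1)\<^sup>2 + (norm (A y) / norm y - 1)\<^sup>2
           + (norm (A (x + y)) / norm (x + y) - 1)\<^sup>2)))"
proof (intro exI[of _ "\<lambda>\<theta>r. stability_const (snd \<theta>r) (sin (fst \<theta>r))"] conjI ballI allI impI)
  have "sin \<theta> \<noteq> 0" if "0 < \<theta>" "\<theta> < pi" for \<theta>
    using sin_gt_zero[OF that] by simp
  then show "continuous_on ({0<..<pi} \<times> {0<..}) (\<lambda>\<theta>r. stability_const (snd \<theta>r) (sin (fst \<theta>r)))"
    unfolding stability_const_def diag_const_def offdiag_const_def
    by (intro continuous_intros) auto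
next
  fix x y :: 'v and A :: "'v \<Rightarrow> 'w"
  assume "independent {x, y} \<and> x \<noteq> y" and "linear A"
  then show "(dist_O A)\<^sup>2 \<le> stability_const (snd (vangle x y, norm y / norm x))
      (sin (fst (vangle x y, norm y / norm x))) *
      ((norm (A x) / norm x - 1)\<^sup>2 + (norm (A y) / norm y - 1)\<^sup>2
       + (norm (A (x + y)) / norm (x + y) - 1)\<^sup>2)"
    using dist_O_sq_le_stability_const[OF assms] by simp
qed (simp add: stability_const_pos)

end
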